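(* Let $P$ be an $n\times n$ non-negative matrix that is diagonally dominant, i.e. $P(i,i)\ge\sum_{j\ne i}P(i,j)$ for $1\le i\le n$. Then $$\max_{Q\in\Omega_n}CW(P,Q)=\max_{Q\in RS_n}CW(P,Q)=\sum_{1\le i\le n}\log(P(i,i)).$$
   Context: $\Omega_n$ is the set of $n\times n$ doubly-stochastic matrices and $RS_n$ the set of $n\times n$ row-stochastic matrices (non-negative entries, each row sums to $1$). For non-negative $n\times n$ matrices $P,Q$, $$CW(P,Q)=\sum_{i,j}(1-Q(i,j))\log(1-Q(i,j)) - \sum_{i,j}Q(i,j)\log\!\left(\frac{Q(i,j)}{P(i,j)}\right),$$ with the conventions $0^0=1$ (a term with $Q(i,j)=0$ contributes $0$), a term with $Q(i,j)>0=P(i,j)$ equals $-\infty$, and $\log 0=-\infty$. *)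

theory Defs
  imports "HOL-Analysis.Analysis"
begin

text \<open>n x n matrices are rendered as real^'n^'n with 'n a finite type (n = CARD('n)).\<close>

definition doubly_stochastic :: "(real^'n::finite^'n) set" where
  "doubly_stochastic = {Q. (\<forall>i j. 0 \<le> Q$i$j) \<and> (\<forall>i. (\<Sum>j\<in>UNIV. Q$i$j) = 1)
                           \<and> (\<forall>j. (\<Sum>i\<in>UNIV. Q$i$j) = 1)}"

definition row_stochastic :: "(real^'n::finite^'n) set" where
  "row_stochastic = {Q. (\<forall>i j. 0 \<le> Q$i$j) \<and> (\<forall>i. (\<Sum>j\<in>UNIV. Q$i$j) = 1)}"

definition xlogx :: "real \<Rightarrow> real" where
  "xlogx x = (if x = 0 then 0 else x * ln x)"

text \<open>Single (i,j) term of CW, valued in the extended reals: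
  (1-q) log(1-q) - q log(q/p), where a term with q = 0 contributes 0 to the second sum
  and a term with q > 0 = p equals -infinity.\<close>
definition CW_term :: "real \<Rightarrow> real \<Rightarrow> ereal" where
  "CW_term p q = (if q = 0 then ereal (xlogx (1 - q))
                  else if p = 0 then -\<infinity>
                  else ereal (xlogx (1 - q) - q * ln (q / p)))"

definition CW :: "real^'n::finite^'n \<Rightarrow> real^'n^'n \<Rightarrow> ereal" where
  "CW P Q = (\<Sum>i\<in>UNIV. \<Sum>j\<in>UNIV. CW_term (P$i$j) (Q$i$j))"

definition elog :: "real \<Rightarrow> ereal" where
  "elog x = (if x = 0 then -\<infinity> else ereal (ln x))"

end

theory Submission
  imports Defs
begin

text \<open>The identity matrix attains the bound, so it suffices to bound each row of \<open>CW P Q\<close>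
  by \<open>log P(i,i)\<close> for row-stochastic \<open>Q\<close>. Split row \<open>i\<close> into the diagonal entry \<open>q\<^sub>i = 1 - s\<close>
  and the rest, of total mass \<open>s\<close>. Since \<open>x \<mapsto> (1-x) log(1-x)\<close> is convex and vanishes at \<open>0\<close>,
  it is superadditive, so the off-diagonal entropy terms sum to at most \<open>q\<^sub>i log q\<^sub>i\<close>; by the
  log-sum inequality and diagonal dominance the off-diagonal divergence terms are at least
  \<open>s log s - s log P(i,i)\<close>. Adding the diagonal term, everything cancels except \<open>log P(i,i)\<close>.\<close>

lemma convex_on_xlogx: "convex_on {0..} xlogx"
proof (rule convex_on_linorderI)
  have convex_pos: "convex_on {0<..} (\<lambda>y::real. y * ln y)"
    by (rule convex_on_realI[where f' = "\<lambda>y. ln y + 1"])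
       (auto intro!: derivative_eq_intros)
  fix t x y :: real
  assume t: "0 < t" "t < 1" and xy: "x \<in> {0..}" "y \<in> {0..}" "x < y"
  show "xlogx ((1 - t) *\<^sub>R x + t *\<^sub>R y) \<le> (1 - t) * xlogx x + t * xlogx y"
  proof (cases "x = 0")
    case True
    have "t * y * ln t \<le> 0"
      using t xy by (intro mult_nonneg_nonpos) auto
    then show ?thesis
      using True t xy by (simp add: xlogx_def ln_mult algebra_simps)
  next
    case False
    with xy t have "x > 0" "y > 0" "(1 - t) * x + t * y > 0"
      by (auto intro: add_pos_pos)
    with convex_onD[OF convex_pos, of t x y] t show ?thesis
      by (simp add: xlogx_def)
  qed
qed simp

lemma convex_on_xlogx_one_minus: "convex_on {..1} (\<lambda>x. xlogx (1 - x))"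
proof (rule convex_onI)
  fix t x y :: real
  assume "0 < t" "t < 1" "x \<in> {..1}" "y \<in> {..1}"
  then have "xlogx ((1 - t) *\<^sub>R (1 - x) + t *\<^sub>R (1 - y))
      \<le> (1 - t) * xlogx (1 - x) + t * xlogx (1 - y)"
    by (intro convex_onD[OF convex_on_xlogx]) auto
  then show "xlogx (1 - ((1 - t) *\<^sub>R x + t *\<^sub>R y))
      \<le> (1 - t) * xlogx (1 - x) + t * xlogx (1 - y)"
    by (simp add: algebra_simps)
qed simp

lemma superadditive_convex_sum:
  fixes g :: "real \<Rightarrow> real" and q :: "'a \<Rightarrow> real"
  assumes "finite A" and q: "\<And>j. j \<in> A \<Longrightarrow> 0 \<le> q j"
    and g: "convex_on {0..sum q A} g" "g 0 = 0"
  shows "(\<Sum>j\<in>A. g (q j)) \<le> g (sum q A)"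
proof (cases "sum q A = 0")
  case True
  then have "\<forall>j\<in>A. q j = 0"
    using \<open>finite A\<close> q by (simp add: sum_nonneg_eq_0_iff)
  then show ?thesis
    using True g by simp
next
  case False
  define s where "s = sum q A"
  have "s > 0"
    using False q by (simp add: s_def less_le sum_nonneg)
  have "g (q j) \<le> g s / s * q j" if "j \<in> A" for j
  proof -
    have "q j \<in> {0..s}"
      unfolding s_def using \<open>finite A\<close> q that by (auto intro: member_le_sum)
    then show ?thesis
      using convex_onD_Icc'[OF g(1)[folded s_def]] g(2) by simp
  qed
  then have "(\<Sum>j\<in>A. g (q j)) \<le> (\<Sum>j\<in>A. g s / s * q j)"
    by (rule sum_mono)
  also have "\<dots> = g s"
    using \<open>s > 0\<close> by (simp add: s_def flip: sum_divide_distrib sum_distrib_left)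
  finally show ?thesis
    by (simp add: s_def)
qed

lemma log_sum_inequality:
  fixes p q :: "'a \<Rightarrow> real"
  assumes "finite A"
    and p: "\<And>j. j \<in> A \<Longrightarrow> 0 \<le> p j" and q: "\<And>j. j \<in> A \<Longrightarrow> 0 \<le> q j"
    and supp: "\<And>j. j \<in> A \<Longrightarrow> 0 < q j \<Longrightarrow> 0 < p j"
    and c: "sum p A \<le> c" "0 < c"
  shows "xlogx (sum q A) - sum q A * ln c \<le> (\<Sum>j\<in>A. q j * ln (q j / p j))"
proof (cases "sum q A = 0")
  case True
  then have "\<forall>j\<in>A. q j = 0"
    using \<open>finite A\<close> q by (simp add: sum_nonneg_eq_0_iff)
  then show ?thesis
    using True by (simp add: xlogx_def)
next
  case False
  define s where "s = sum q A"
  have "s > 0"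
    using False q by (simp add: s_def less_le sum_nonneg)
  \<comment> \<open>\<open>ln z \<le> z - 1\<close> at \<open>z = p\<^sub>j s / (q\<^sub>j c)\<close>\<close>
  have termwise: "q j * ln c - q j * ln s + p j * s / c - q j \<ge> - (q j * ln (q j / p j))"
    if "j \<in> A" for j
  proof (cases "q j = 0")
    case True
    then show ?thesis
      using p[OF that] \<open>s > 0\<close> c by simp
  next
    case False
    with q that have qj: "q j > 0"
      by (simp add: less_le)
    with supp that have pj: "p j > 0"
      by simp
    have "ln (p j * s / (q j * c)) \<le> p j * s / (q j * c) - 1"
      using qj pj \<open>s > 0\<close> c by (intro ln_le_minus_one) simp
    then have "q j * ln (p j * s / (q j * c)) \<le> q j * (p j * s / (q j * c) - 1)"
      using qj by (simp add: mult_left_mono)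
    moreover have "q j * (p j * s / (q j * c) - 1) = p j * s / c - q j"
      using qj by (simp add: field_simps)
    moreover have "q j * ln (p j * s / (q j * c))
        = - (q j * ln (q j / p j)) + q j * ln s - q j * ln c"
      using qj pj \<open>s > 0\<close> c by (simp add: ln_div ln_mult algebra_simps)
    ultimately show ?thesis
      by (simp add: algebra_simps)
  qed
  have "- (\<Sum>j\<in>A. q j * ln (q j / p j))
      \<le> (\<Sum>j\<in>A. q j * ln c - q j * ln s + p j * s / c - q j)"
    by (simp add: sum_mono termwise flip: sum_negf)
  also have "\<dots> = s * ln c - s * ln s + sum p A * s / c - s"
    by (simp add: s_def sum.distrib sum_subtractf sum_distrib_right sum_divide_distrib)
  also have "\<dots> \<le> s * ln c - s * ln s"
    using c \<open>s > 0\<close> by (simp add: field_simps mult_right_mono)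
  finally show ?thesis
    using \<open>s > 0\<close> by (simp add: s_def xlogx_def)
qed

lemma row_sum_le_ln_diagonal:
  fixes p q :: "'a::finite \<Rightarrow> real"
  assumes p: "\<forall>j. 0 \<le> p j" and q: "\<forall>j. 0 \<le> q j" "sum q UNIV = 1"
    and dominant: "sum p (UNIV - {i}) \<le> p i" and "0 < p i"
    and supp: "\<forall>j. 0 < q j \<longrightarrow> 0 < p j"
  shows "(\<Sum>j\<in>UNIV. xlogx (1 - q j) - q j * ln (q j / p j)) \<le> ln (p i)"
proof -
  define R where "R = UNIV - {i}"
  define s where "s = sum q R"
  have qi: "q i = 1 - s"
    using q(2) sum.remove[of UNIV i q] by (simp add: s_def R_def)
  have "s \<le> 1"
    using spec[OF q(1), of i] qi by linarith
  have entropy: "(\<Sum>j\<in>R. xlogx (1 - q j)) \<le> xlogx (q i)"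
  proof -
    have "convex_on {0..s} (\<lambda>x. xlogx (1 - x))"
      using \<open>s \<le> 1\<close> by (auto intro: convex_on_subset[OF convex_on_xlogx_one_minus])
    then show ?thesis
      using superadditive_convex_sum[of R q "\<lambda>x. xlogx (1 - x)"] q(1) qi
      by (simp add: s_def xlogx_def)
  qed
  have divergence: "xlogx s - s * ln (p i) \<le> (\<Sum>j\<in>R. q j * ln (q j / p j))"
    using log_sum_inequality[of R p q "p i"] p q(1) supp dominant \<open>0 < p i\<close>
    by (simp add: s_def R_def)
  have diagonal: "xlogx (1 - q i) - q i * ln (q i / p i) = xlogx s - xlogx (q i) + q i * ln (p i)"
  proof -
    have "xlogx (1 - q i) = xlogx s"
      by (simp add: qi)
    moreover have "q i * ln (q i / p i) = xlogx (q i) - q i * ln (p i)"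
      using \<open>0 < p i\<close> spec[OF q(1), of i]
      by (cases "q i = 0") (auto simp: xlogx_def ln_div algebra_simps)
    ultimately show ?thesis
      by simp
  qed
  have "(\<Sum>j\<in>UNIV. xlogx (1 - q j) - q j * ln (q j / p j))
      = (xlogx (1 - q i) - q i * ln (q i / p i))
        + (\<Sum>j\<in>R. xlogx (1 - q j)) - (\<Sum>j\<in>R. q j * ln (q j / p j))"
    by (simp add: R_def sum.remove[of UNIV i] sum_subtractf)
  also have "\<dots> \<le> (q i + s) * ln (p i)"
    using entropy divergence diagonal by (simp add: algebra_simps)
  also have "\<dots> = ln (p i)"
    by (simp add: qi)
  finally show ?thesis .
qed

lemma sum_ereal_MInfty:
  fixes f :: "'a \<Rightarrow> ereal"
  assumes "finite A" "j \<in> A" "f j = -\<infinity>" "\<forall>k\<in>A. f k \<noteq> \<infinity>"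
  shows "sum f A = -\<infinity>"
proof -
  have "sum f (A - {j}) \<noteq> \<infinity>"
    using assms(4) by (simp add: sum_Pinfty)
  then show ?thesis
    using assms(1-3) by (simp add: sum.remove[of A j])
qed

lemma CW_row_le_elog_diagonal:
  fixes p q :: "'a::finite \<Rightarrow> real"
  assumes p: "\<forall>j. 0 \<le> p j" and q: "\<forall>j. 0 \<le> q j" "sum q UNIV = 1"
    and dominant: "sum p (UNIV - {i}) \<le> p i"
  shows "(\<Sum>j\<in>UNIV. CW_term (p j) (q j)) \<le> elog (p i)"
proof (cases "\<exists>j. 0 < q j \<and> p j = 0")
  case True
  then obtain j where "0 < q j" "p j = 0"
    by blast
  then have "CW_term (p j) (q j) = -\<infinity>"
    by (simp add: CW_term_def)
  then have "(\<Sum>j\<in>UNIV. CW_term (p j) (q j)) = -\<infinity>"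
    by (intro sum_ereal_MInfty) (auto simp: CW_term_def)
  then show ?thesis
    by simp
next
  case False
  with p have supp: "\<forall>j. 0 < q j \<longrightarrow> 0 < p j"
    by (metis less_le)
  \<comment> \<open>a row of \<open>q\<close> has some positive entry, so by dominance \<open>p\<^sub>i = 0\<close> would force \<open>p = 0\<close>\<close>
  have "0 < p i"
  proof (rule ccontr)
    assume "\<not> 0 < p i"
    with p have "p i = 0"
      by (simp add: order.strict_iff_order)
    with p dominant have "sum p (UNIV - {i}) = 0"
      by (simp add: order.antisym sum_nonneg)
    with p \<open>p i = 0\<close> have "\<forall>j. p j = 0"
      by (simp add: sum_nonneg_eq_0_iff) blast
    with supp q(1) have "\<forall>j. q j = 0"
      by (auto simp: order.strict_iff_order)
    with q(2) show False
      by simp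
  qed
  have "\<And>j. CW_term (p j) (q j) = ereal (xlogx (1 - q j) - q j * ln (q j / p j))"
    using supp q(1) by (auto simp: CW_term_def less_le)
  then have "(\<Sum>j\<in>UNIV. CW_term (p j) (q j))
      = ereal (\<Sum>j\<in>UNIV. xlogx (1 - q j) - q j * ln (q j / p j))"
    by simp
  also have "\<dots> \<le> elog (p i)"
    using row_sum_le_ln_diagonal[OF p q dominant \<open>0 < p i\<close> supp] \<open>0 < p i\<close>
    by (simp add: elog_def)
  finally show ?thesis .
qed

lemma CW_mat_one: "CW P (mat 1) = (\<Sum>i\<in>UNIV. elog (P$i$i))"
proof -
  have "(\<Sum>j\<in>UNIV. CW_term (P$i$j) (mat 1 $ i $ j)) = elog (P$i$i)" for i
  proof -
    have "(\<Sum>j\<in>UNIV - {i}. CW_term (P$i$j) (mat 1 $ i $ j)) = 0"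
      by (rule sum.neutral) (auto simp: mat_def CW_term_def xlogx_def zero_ereal_def)
    then show ?thesis
      by (simp add: sum.remove[of UNIV i] mat_def CW_term_def elog_def xlogx_def ln_div)
  qed
  then show ?thesis
    by (simp add: CW_def)
qed

lemma mat_one_doubly_stochastic: "mat 1 \<in> doubly_stochastic"
  by (simp add: doubly_stochastic_def mat_def)

lemma doubly_stochastic_subset_row_stochastic: "doubly_stochastic \<subseteq> row_stochastic"
  by (auto simp: doubly_stochastic_def row_stochastic_def)

theorem corollary5p10:
  fixes P :: "real^'n::finite^'n"
  assumes nonneg: "\<forall>i j. 0 \<le> P$i$j"
    and diagdom: "\<forall>i. P$i$i \<ge> (\<Sum>j\<in>UNIV - {i}. P$i$j)"
  shows "(\<exists>Q\<in>doubly_stochastic. CW P Q = (\<Sum>i\<in>UNIV. elog (P$i$i)))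
       \<and> (\<forall>Q\<in>doubly_stochastic. CW P Q \<le> (\<Sum>i\<in>UNIV. elog (P$i$i)))
       \<and> (\<exists>Q\<in>row_stochastic. CW P Q = (\<Sum>i\<in>UNIV. elog (P$i$i)))
       \<and> (\<forall>Q\<in>row_stochastic. CW P Q \<le> (\<Sum>i\<in>UNIV. elog (P$i$i)))"
proof -
  have upper: "CW P Q \<le> (\<Sum>i\<in>UNIV. elog (P$i$i))" if "Q \<in> row_stochastic" for Q
    unfolding CW_def
    using that nonneg diagdom
    by (intro sum_mono CW_row_le_elog_diagonal) (auto simp: row_stochastic_def)
  show ?thesis
    using upper CW_mat_one mat_one_doubly_stochastic doubly_stochastic_subset_row_stochastic
    by blast
qed

end
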